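(* For integers $M\ge2$ and $\beta\in(0,1)$ let $C=\frac{1-\beta}{2M-1}$, $\mu_0=(M-1)C^{-1}$, $\sigma_0=\sqrt{\mu_0(C^{-1}-1)}$. Let $\hat Z_0=G+\min(N_1,N_2)$ where $G,N_1,N_2$ are independent, $G$ is geometric on $\{1,2,\dots\}$ with success probability $\beta$, and $N_1,N_2\sim\mathcal{N}(\mu_0,\sigma_0^2)$. Then $$\mathbb{E}[\hat Z_0]=\frac1\beta+\mu_0-\frac{\sigma_0}{\sqrt\pi}.$$ Moreover, if $\beta^*_M\in(0,1)$ denotes a minimizer of $\beta\mapsto\mathbb{E}[\hat Z_0]$ over $(0,1)$, then $M\beta^*_M\to\frac{\sqrt2}{2}$ as $M\to\infty$, i.e. $\beta^*_M\sim\frac{\sqrt2}{2M}$.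
   Context: This is the Gaussian approximation of the age of information at the node diametrically opposite the source in a ring of $2M$ nodes under the uniform Bernoulli policy: the source transmits its own information with probability $\beta$ and every other piece of information is transmitted with probability $C=(1-\beta)/(2M-1)$. *)

theory Defs
  imports "HOL-Probability.Probability"
begin

text \<open>Parameters of the uniform Bernoulli policy on a ring of 2M nodes.\<close>
definition C_par :: "nat \<Rightarrow> real \<Rightarrow> real" where
  "C_par M \<beta> = (1 - \<beta>) / (2 * real M - 1)"

definition mu0 :: "nat \<Rightarrow> real \<Rightarrow> real" where
  "mu0 M \<beta> = (real M - 1) * inverse (C_par M \<beta>)"

definition sigma0 :: "nat \<Rightarrow> real \<Rightarrow> real" where
  "sigma0 M \<beta> = sqrt (mu0 M \<beta> * (inverse (C_par M \<beta>) - 1))"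

text \<open>Law of G: geometric on {1,2,...} with success probability beta
  (P(G = k) = (1-beta)^(k-1) beta), i.e. 1 + the library geometric on {0,1,...}.\<close>
definition geom1 :: "real \<Rightarrow> nat measure" where
  "geom1 \<beta> = measure_pmf (map_pmf Suc (geometric_pmf \<beta>))"

definition normal0 :: "nat \<Rightarrow> real \<Rightarrow> real measure" where
  "normal0 M \<beta> = density lborel (normal_density (mu0 M \<beta>) (sigma0 M \<beta>))"

definition Z0_space :: "nat \<Rightarrow> real \<Rightarrow> (nat \<times> real \<times> real) measure" where
  "Z0_space M \<beta> = geom1 \<beta> \<Otimes>\<^sub>M (normal0 M \<beta> \<Otimes>\<^sub>M normal0 M \<beta>)"

definition Zhat0 :: "nat \<times> real \<times> real \<Rightarrow> real" where
  "Zhat0 = (\<lambda>(g, n1, n2). real g + min n1 n2)"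

definition EZhat0 :: "nat \<Rightarrow> real \<Rightarrow> real" where
  "EZhat0 M \<beta> = (\<integral>\<omega>. Zhat0 \<omega> \<partial>Z0_space M \<beta>)"

end

(* min(N1, N2) = (N1 + N2)/2 - |N1 - N2|/2, and N1 - N2 is a centred normal with standard
   deviation sqrt 2 * sigma0, whose absolute first moment is 2 sigma0 / sqrt pi.

   With a = (M - 1)(2M - 1) the expectation reads 1/beta + (a - g beta)/(1 - beta) for an
   increasing g.  Bounding it below by 1/beta + (a - g 1)(1 + beta), above by
   1/beta + (a - g 0)/(1 - beta), and comparing the minimiser with the trial point
   sqrt 2/(2M) gives 1/x + alpha_M x <= R_M for x = M beta*, where alpha_M -> 2 and
   R_M -> 2 sqrt 2.  As 1/x + alpha x >= 2 sqrt alpha with equality only at x = 1/sqrt alpha,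
   this squeezes x to 1/sqrt 2. *)

theory Submission
  imports Defs "HOL-Real_Asymp.Real_Asymp"
begin

lemma distr_pair_snd:
  assumes "prob_space A" "prob_space B"
  shows "distr (A \<Otimes>\<^sub>M B) B snd = B"
proof -
  interpret A: prob_space A by fact
  interpret B: prob_space B by fact
  interpret BA: pair_prob_space B A ..
  have "distr (A \<Otimes>\<^sub>M B) B snd = distr (distr (A \<Otimes>\<^sub>M B) (B \<Otimes>\<^sub>M A) (\<lambda>(x, y). (y, x))) B fst"
    by (subst distr_distr) (auto intro!: distr_cong)
  also have "\<dots> = B"
    by (simp flip: BA.distr_pair_swap add: A.distr_pair_fst)
  finally show ?thesis .
qed

lemma
  fixes f :: "'a \<Rightarrow> 'c::{banach, second_countable_topology}"
  assumes "prob_space B" and f: "integrable A f"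
  shows integrable_pair_fst: "integrable (A \<Otimes>\<^sub>M B) (\<lambda>\<omega>. f (fst \<omega>))"
    and integral_pair_fst: "(\<integral>\<omega>. f (fst \<omega>) \<partial>(A \<Otimes>\<^sub>M B)) = (\<integral>x. f x \<partial>A)"
proof -
  have f_meas: "f \<in> borel_measurable A" using f by (rule borel_measurable_integrable)
  have marginal: "distr (A \<Otimes>\<^sub>M B) A fst = A" by (rule prob_space.distr_pair_fst[OF assms(1)])
  show "integrable (A \<Otimes>\<^sub>M B) (\<lambda>\<omega>. f (fst \<omega>))"
    using integrable_distr_eq[OF measurable_fst[of A B] f_meas] f marginal by simp
  show "(\<integral>\<omega>. f (fst \<omega>) \<partial>(A \<Otimes>\<^sub>M B)) = (\<integral>x. f x \<partial>A)"
    using integral_distr[OF measurable_fst[of A B] f_meas] marginal by simp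
qed

lemma
  fixes f :: "'b \<Rightarrow> 'c::{banach, second_countable_topology}"
  assumes "prob_space A" "prob_space B" and f: "integrable B f"
  shows integrable_pair_snd: "integrable (A \<Otimes>\<^sub>M B) (\<lambda>\<omega>. f (snd \<omega>))"
    and integral_pair_snd: "(\<integral>\<omega>. f (snd \<omega>) \<partial>(A \<Otimes>\<^sub>M B)) = (\<integral>x. f x \<partial>B)"
proof -
  have f_meas: "f \<in> borel_measurable B" using f by (rule borel_measurable_integrable)
  have marginal: "distr (A \<Otimes>\<^sub>M B) B snd = B" by (rule distr_pair_snd[OF assms(1,2)])
  show "integrable (A \<Otimes>\<^sub>M B) (\<lambda>\<omega>. f (snd \<omega>))"
    using integrable_distr_eq[OF measurable_snd[of A B] f_meas] f marginal by simp
  show "(\<integral>\<omega>. f (snd \<omega>) \<partial>(A \<Otimes>\<^sub>M B)) = (\<integral>x. f x \<partial>B)"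
    using integral_distr[OF measurable_snd[of A B] f_meas] marginal by simp
qed

lemma indep_var_fst_snd:
  assumes A: "prob_space A" and B: "prob_space B"
    and sets_S: "sets S = sets A" and sets_T: "sets T = sets B"
  shows "prob_space.indep_var (A \<Otimes>\<^sub>M B) S fst T snd"
proof -
  have AB: "prob_space (A \<Otimes>\<^sub>M B)" using A B by (rule prob_space_pair)
  have distr_fst: "distr (A \<Otimes>\<^sub>M B) S fst = A"
    using prob_space.distr_pair_fst[OF B] distr_cong[OF refl sets_S] by metis
  have distr_snd: "distr (A \<Otimes>\<^sub>M B) T snd = B"
    using distr_pair_snd[OF A B] distr_cong[OF refl sets_T] by metis
  have "sets (A \<Otimes>\<^sub>M B) = sets (S \<Otimes>\<^sub>M T)"
    by (rule sets_pair_measure_cong) (simp_all add: sets_S sets_T)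
  then have distr_pair: "distr (A \<Otimes>\<^sub>M B) (S \<Otimes>\<^sub>M T) (\<lambda>\<omega>. (fst \<omega>, snd \<omega>)) = A \<Otimes>\<^sub>M B"
    using distr_id2[of "S \<Otimes>\<^sub>M T" "A \<Otimes>\<^sub>M B"] by simp
  show ?thesis
    unfolding prob_space.indep_var_distribution_eq[OF AB] distr_fst distr_snd distr_pair
    by (simp add: measurable_cong_sets[OF refl sets_S] measurable_cong_sets[OF refl sets_T])
qed

lemma
  fixes \<mu> \<sigma> :: real
  assumes \<sigma>: "0 < \<sigma>"
  defines "N \<equiv> density lborel (normal_density \<mu> \<sigma>)"
  shows integrable_abs_diff_iid_normal: "integrable (N \<Otimes>\<^sub>M N) (\<lambda>\<omega>. \<bar>fst \<omega> - snd \<omega>\<bar>)"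
    and integral_abs_diff_iid_normal: "(\<integral>\<omega>. \<bar>fst \<omega> - snd \<omega>\<bar> \<partial>(N \<Otimes>\<^sub>M N)) = 2 * \<sigma> / sqrt pi"
proof -
  have N: "prob_space N" unfolding N_def using \<sigma> by (rule prob_space_normal_density)
  have NN: "prob_space (N \<Otimes>\<^sub>M N)" using N N by (rule prob_space_pair)
  have sets_N: "sets N = sets lborel" unfolding N_def by simp
  have "distr (N \<Otimes>\<^sub>M N) lborel fst = N"
    using prob_space.distr_pair_fst[OF N] distr_cong[OF refl sets_N[symmetric], where f=fst and g=fst]
    by metis
  then have "distributed (N \<Otimes>\<^sub>M N) lborel fst (normal_density \<mu> \<sigma>)"
    by (simp add: distributed_def N_def measurable_cong_sets[OF refl sets_N])
  moreover have "distr (N \<Otimes>\<^sub>M N) lborel snd = N"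
    using distr_pair_snd[OF N N] distr_cong[OF refl sets_N[symmetric], where f=snd and g=snd]
    by metis
  then have "distributed (N \<Otimes>\<^sub>M N) lborel snd (normal_density \<mu> \<sigma>)"
    by (simp add: distributed_def N_def measurable_cong_sets[OF refl sets_N])
  moreover have "prob_space.indep_var (N \<Otimes>\<^sub>M N) borel fst borel snd"
    by (rule indep_var_fst_snd[OF N N]) (simp_all add: sets_N)
  ultimately have "distributed (N \<Otimes>\<^sub>M N) lborel (\<lambda>\<omega>. fst \<omega> - snd \<omega>)
      (normal_density (\<mu> - \<mu>) (sqrt (\<sigma>\<^sup>2 + \<sigma>\<^sup>2)))"
    using prob_space.diff_indep_normal[OF NN _ \<sigma> \<sigma>] by blast
  moreover have "sqrt (\<sigma>\<^sup>2 + \<sigma>\<^sup>2) = sqrt 2 * \<sigma>"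
    using \<sigma> by (simp add: real_sqrt_mult)
  ultimately have diff: "distributed (N \<Otimes>\<^sub>M N) lborel (\<lambda>\<omega>. fst \<omega> - snd \<omega>)
      (normal_density 0 (sqrt 2 * \<sigma>))"
    by simp
  have \<tau>: "0 < sqrt 2 * \<sigma>" using \<sigma> by simp
  show "integrable (N \<Otimes>\<^sub>M N) (\<lambda>\<omega>. \<bar>fst \<omega> - snd \<omega>\<bar>)"
    using distributed_integrable[OF diff, of abs] integrable_normal_moment_abs[OF \<tau>, of 0 1] by simp
  have "(\<integral>\<omega>. \<bar>fst \<omega> - snd \<omega>\<bar> \<partial>(N \<Otimes>\<^sub>M N)) = sqrt 2 * \<sigma> * sqrt (2 / pi)"
    using distributed_integral[OF diff, of abs] integral_normal_moment_abs_odd[OF \<tau>, of 0 0] by simp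
  also have "\<dots> = 2 * \<sigma> / sqrt pi"
    by (simp add: real_sqrt_divide)
  finally show "(\<integral>\<omega>. \<bar>fst \<omega> - snd \<omega>\<bar> \<partial>(N \<Otimes>\<^sub>M N)) = 2 * \<sigma> / sqrt pi" .
qed

lemma
  fixes \<mu> \<sigma> :: real
  assumes \<sigma>: "0 < \<sigma>"
  defines "N \<equiv> density lborel (normal_density \<mu> \<sigma>)"
  shows integrable_min_iid_normal: "integrable (N \<Otimes>\<^sub>M N) (\<lambda>\<omega>. min (fst \<omega>) (snd \<omega>))"
    and integral_min_iid_normal: "(\<integral>\<omega>. min (fst \<omega>) (snd \<omega>) \<partial>(N \<Otimes>\<^sub>M N)) = \<mu> - \<sigma> / sqrt pi"
proof -
  have N: "prob_space N" unfolding N_def using \<sigma> by (rule prob_space_normal_density)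
  have mean: "integrable N (\<lambda>x. x)" "(\<integral>x. x \<partial>N) = \<mu>"
    unfolding N_def using integrable_normal_moment_nz_1[OF \<sigma>, of \<mu>] integral_normal_moment_nz_1[OF \<sigma>, of \<mu>]
    by (simp_all add: integrable_density integral_density mult.commute)
  note abs_diff = integrable_abs_diff_iid_normal[OF \<sigma>, of \<mu>, folded N_def]
    integral_abs_diff_iid_normal[OF \<sigma>, of \<mu>, folded N_def]
  have min_eq: "(\<lambda>\<omega>::real \<times> real. min (fst \<omega>) (snd \<omega>))
      = (\<lambda>\<omega>. fst \<omega> / 2 + snd \<omega> / 2 - \<bar>fst \<omega> - snd \<omega>\<bar> / 2)"
    by (auto simp: fun_eq_iff min_def field_simps)
  show "integrable (N \<Otimes>\<^sub>M N) (\<lambda>\<omega>. min (fst \<omega>) (snd \<omega>))"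
    unfolding min_eq using integrable_pair_fst[OF N mean(1)] integrable_pair_snd[OF N N mean(1)] abs_diff(1)
    by auto
  show "(\<integral>\<omega>. min (fst \<omega>) (snd \<omega>) \<partial>(N \<Otimes>\<^sub>M N)) = \<mu> - \<sigma> / sqrt pi"
    unfolding min_eq using integrable_pair_fst[OF N mean(1)] integrable_pair_snd[OF N N mean(1)] abs_diff
      integral_pair_fst[OF N mean(1)] integral_pair_snd[OF N N mean(1)] mean(2)
    by simp
qed

lemma
  assumes "0 < p" "p \<le> 1"
  shows integrable_real_geom1: "integrable (geom1 p) real"
    and integral_real_geom1: "(\<integral>n. real n \<partial>geom1 p) = 1 / p"
proof -
  have p: "p \<in> {0<..1}" using assms by simp
  show "integrable (geom1 p) real"
    using integrable_real_geometric_pmf[OF p] by (simp add: geom1_def)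
  have "(\<integral>n. real n \<partial>geom1 p) = (\<integral>n. 1 + real n \<partial>geometric_pmf p)"
    by (simp add: geom1_def)
  also have "\<dots> = 1 + (1 - p) / p"
    using integrable_real_geometric_pmf[OF p] expectation_geometric_pmf[OF p]
    by (simp add: measure_pmf.prob_space)
  also have "\<dots> = 1 / p" using assms by (simp add: field_simps)
  finally show "(\<integral>n. real n \<partial>geom1 p) = 1 / p" .
qed

definition mean_scale :: "nat \<Rightarrow> real" where
  "mean_scale M = (real M - 1) * (2 * real M - 1)"

text \<open>\<open>scaled_gap M \<beta> = (1 - \<beta>) * sigma0 M \<beta> / sqrt pi\<close>, see \<open>sigma0_eq\<close>.\<close>
definition scaled_gap :: "nat \<Rightarrow> real \<Rightarrow> real" where
  "scaled_gap M t = sqrt (mean_scale M * (2 * real M - 2 + t)) / sqrt pi"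

lemma mean_scale_pos: "2 \<le> M \<Longrightarrow> 0 < mean_scale M"
  by (simp add: mean_scale_def)

lemma mean_scale_nonneg: "0 \<le> mean_scale M"
  by (cases M) (simp_all add: mean_scale_def)

lemma scaled_gap_mono: "t \<le> s \<Longrightarrow> scaled_gap M t \<le> scaled_gap M s"
  unfolding scaled_gap_def
  by (intro divide_right_mono real_sqrt_le_mono mult_left_mono mean_scale_nonneg) auto

lemma mu0_eq:
  assumes "1 \<le> M"
  shows "mu0 M \<beta> = mean_scale M / (1 - \<beta>)"
  using assms by (simp add: mu0_def C_par_def mean_scale_def)

lemma sigma0_eq:
  assumes "1 \<le> M" "\<beta> < 1"
  shows "sigma0 M \<beta> = sqrt (mean_scale M * (2 * real M - 2 + \<beta>)) / (1 - \<beta>)"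
proof -
  have "inverse (C_par M \<beta>) - 1 = (2 * real M - 2 + \<beta>) / (1 - \<beta>)"
    using assms by (simp add: C_par_def field_simps)
  then have "mu0 M \<beta> * (inverse (C_par M \<beta>) - 1)
      = mean_scale M * (2 * real M - 2 + \<beta>) / (1 - \<beta>)\<^sup>2"
    using assms by (simp add: mu0_eq power2_eq_square)
  then show ?thesis
    using assms by (simp add: sigma0_def real_sqrt_divide)
qed

lemma sigma0_pos:
  assumes "2 \<le> M" "0 < \<beta>" "\<beta> < 1"
  shows "0 < sigma0 M \<beta>"
  using assms mean_scale_pos[OF assms(1)] by (simp add: sigma0_eq)

lemma EZhat0_eq:
  assumes "2 \<le> M" "0 < \<beta>" "\<beta> < 1"
  shows "EZhat0 M \<beta> = 1 / \<beta> + mu0 M \<beta> - sigma0 M \<beta> / sqrt pi"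
proof -
  define G where "G = geom1 \<beta>"
  define N where "N = normal0 M \<beta>"
  have \<sigma>: "0 < sigma0 M \<beta>" using assms by (rule sigma0_pos)
  have G: "prob_space G" by (simp add: G_def geom1_def prob_space_measure_pmf)
  have NN: "prob_space (N \<Otimes>\<^sub>M N)"
    using prob_space_normal_density[OF \<sigma>] by (simp add: N_def normal0_def prob_space_pair)
  note geom = integrable_real_geom1[of \<beta>, folded G_def] integral_real_geom1[of \<beta>, folded G_def]
  note normal = integrable_min_iid_normal[OF \<sigma>, of "mu0 M \<beta>", folded normal0_def, folded N_def]
    integral_min_iid_normal[OF \<sigma>, of "mu0 M \<beta>", folded normal0_def, folded N_def]
  have "Zhat0 = (\<lambda>\<omega>. real (fst \<omega>) + min (fst (snd \<omega>)) (snd (snd \<omega>)))"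
    by (auto simp: Zhat0_def fun_eq_iff)
  then have "EZhat0 M \<beta> = (\<integral>\<omega>. real (fst \<omega>) + min (fst (snd \<omega>)) (snd (snd \<omega>)) \<partial>(G \<Otimes>\<^sub>M (N \<Otimes>\<^sub>M N)))"
    by (simp add: EZhat0_def Z0_space_def G_def N_def)
  also have "\<dots> = 1 / \<beta> + (mu0 M \<beta> - sigma0 M \<beta> / sqrt pi)"
    using assms geom normal integrable_pair_fst[OF NN geom(1)] integral_pair_fst[OF NN geom(1)]
      integrable_pair_snd[OF G NN normal(1)] integral_pair_snd[OF G NN normal(1)]
    by simp
  finally show ?thesis by simp
qed

lemma EZhat0_eq_scaled_gap:
  assumes "2 \<le> M" "0 < \<beta>" "\<beta> < 1"
  shows "EZhat0 M \<beta> = 1 / \<beta> + (mean_scale M - scaled_gap M \<beta>) / (1 - \<beta>)"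
  using assms
  by (simp add: EZhat0_eq mu0_eq sigma0_eq scaled_gap_def diff_divide_distrib divide_divide_eq_left mult.commute)

lemma scaled_gap_less_mean_scale:
  assumes "2 \<le> M"
  shows "scaled_gap M 1 < mean_scale M"
proof -
  have M: "2 \<le> real M" using assms by simp
  have a: "0 < mean_scale M" using assms by (rule mean_scale_pos)
  have "1 * pi \<le> (real M - 1) * pi" using M by (intro mult_right_mono) auto
  then have "1 < (real M - 1) * pi" using pi_gt3 by linarith
  then have "(2 * real M - 1) * 1 < (2 * real M - 1) * ((real M - 1) * pi)"
    using M by (intro mult_strict_left_mono) auto
  then have "2 * real M - 1 < mean_scale M * pi"
    by (simp add: mean_scale_def mult_ac)
  then have "sqrt (mean_scale M * (2 * real M - 1)) < sqrt (mean_scale M * mean_scale M * pi)"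
    using a by (simp add: mult.assoc)
  also have "\<dots> = mean_scale M * sqrt pi"
    using a by (simp add: real_sqrt_mult)
  finally show ?thesis by (simp add: scaled_gap_def divide_less_eq)
qed

lemma EZhat0_lower_bound:
  assumes "2 \<le> M" "0 < \<beta>" "\<beta> < 1"
  shows "1 / \<beta> + (mean_scale M - scaled_gap M 1) * (1 + \<beta>) \<le> EZhat0 M \<beta>"
proof -
  have gap: "0 \<le> mean_scale M - scaled_gap M 1"
    using scaled_gap_less_mean_scale[OF assms(1)] by simp
  have "(mean_scale M - scaled_gap M 1) * (1 + \<beta>) \<le> (mean_scale M - scaled_gap M 1) / (1 - \<beta>)"
  proof -
    have "(1 + \<beta>) * (1 - \<beta>) \<le> 1" by (simp add: algebra_simps)
    then have "1 + \<beta> \<le> 1 / (1 - \<beta>)" using assms by (simp add: le_divide_eq)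
    then show ?thesis using gap by (metis mult_left_mono times_divide_eq_right mult_1_right)
  qed
  also have "\<dots> \<le> (mean_scale M - scaled_gap M \<beta>) / (1 - \<beta>)"
    using assms scaled_gap_mono[of \<beta> 1 M] by (intro divide_right_mono) auto
  finally show ?thesis using assms by (simp add: EZhat0_eq_scaled_gap)
qed

lemma EZhat0_upper_bound:
  assumes "2 \<le> M" "0 < \<beta>" "\<beta> < 1"
  shows "EZhat0 M \<beta> \<le> 1 / \<beta> + (mean_scale M - scaled_gap M 0) / (1 - \<beta>)"
  using assms scaled_gap_mono[of 0 \<beta> M]
  by (simp add: EZhat0_eq_scaled_gap divide_right_mono)

definition quad_coeff :: "nat \<Rightarrow> real" where
  "quad_coeff M = (mean_scale M - scaled_gap M 1) / (real M)\<^sup>2"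

text \<open>The upper bound at the trial point \<open>\<beta> = sqrt 2 / (2 * M)\<close>, minus the linear part of the lower bound, over \<open>M\<close>.\<close>
definition value_bound :: "nat \<Rightarrow> real" where
  "value_bound M = (real M / (sqrt 2 / 2) + (mean_scale M - scaled_gap M 0) / (1 - (sqrt 2 / 2) / real M)
                    - (mean_scale M - scaled_gap M 1)) / real M"

lemma quad_coeff_tendsto: "quad_coeff \<longlonglongrightarrow> 2"
  unfolding quad_coeff_def scaled_gap_def mean_scale_def by real_asymp

lemma value_bound_tendsto: "value_bound \<longlonglongrightarrow> 2 * sqrt 2"
  unfolding value_bound_def scaled_gap_def mean_scale_def
  by real_asymp (simp flip: sqrt_def add: real_div_sqrt)

lemma minimizer_bound:
  assumes M: "2 \<le> M" and b: "0 < b" "b < 1"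
    and min: "\<forall>\<beta>\<in>{0<..<1}. EZhat0 M b \<le> EZhat0 M \<beta>"
  shows "1 / (real M * b) + quad_coeff M * (real M * b) \<le> value_bound M"
proof -
  define c :: real where "c = sqrt 2 / 2"
  have M_pos: "0 < real M" using M by simp
  have "sqrt 2 < (2::real)" by (rule real_less_lsqrt) auto
  then have "c < 1" unfolding c_def by simp
  then have trial: "0 < c / real M" "c / real M < 1"
    using M by (auto simp: c_def divide_less_eq)
  have "1 / b + (mean_scale M - scaled_gap M 1) * (1 + b) \<le> EZhat0 M b"
    using M b by (rule EZhat0_lower_bound)
  also have "\<dots> \<le> EZhat0 M (c / real M)" using min trial by simp
  also have "\<dots> \<le> 1 / (c / real M) + (mean_scale M - scaled_gap M 0) / (1 - c / real M)"
    using M trial by (rule EZhat0_upper_bound)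
  finally have "1 / b + (mean_scale M - scaled_gap M 1) * b
      \<le> real M / c + (mean_scale M - scaled_gap M 0) / (1 - c / real M) - (mean_scale M - scaled_gap M 1)"
    by (simp add: algebra_simps)
  then have "(1 / b + (mean_scale M - scaled_gap M 1) * b) / real M \<le> value_bound M"
    using M_pos by (simp add: value_bound_def c_def divide_right_mono)
  moreover have "1 / (real M * b) + quad_coeff M * (real M * b) = (1 / b + (mean_scale M - scaled_gap M 1) * b) / real M"
    using M_pos b by (simp add: quad_coeff_def field_simps power2_eq_square)
  ultimately show ?thesis by simp
qed

lemma tendsto_inverse_sqrt_of_AM_GM_bound:
  fixes x \<alpha> R :: "'a \<Rightarrow> real"
  assumes \<alpha>: "(\<alpha> \<longlongrightarrow> a) F" and a: "0 < a" and R: "(R \<longlongrightarrow> 2 * sqrt a) F"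
    and bound: "\<forall>\<^sub>F n in F. 0 < x n \<and> 1 / x n + \<alpha> n * x n \<le> R n"
  shows "(x \<longlongrightarrow> 1 / sqrt a) F"
proof -
  define u where "u n = sqrt (\<alpha> n) * x n - 1" for n
  define E where "E n = R n / \<alpha> n * (R n - 2 * sqrt (\<alpha> n))" for n
  have \<alpha>_pos: "\<forall>\<^sub>F n in F. 0 < \<alpha> n" using \<alpha> a by (rule order_tendstoD)
  have u_sq_le: "\<forall>\<^sub>F n in F. (u n)\<^sup>2 \<le> E n"
    using \<alpha>_pos bound
  proof eventually_elim
    case (elim n)
    then have \<alpha>n: "0 < \<alpha> n" and xn: "0 < x n" and le: "1 / x n + \<alpha> n * x n \<le> R n" by auto
    text \<open>The AM-GM defect of \<open>1 / x + \<alpha> x\<close> is a square.\<close>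
    have "(u n)\<^sup>2 = x n * (1 / x n + \<alpha> n * x n - 2 * sqrt (\<alpha> n))"
      using \<alpha>n xn by (simp add: u_def power2_eq_square field_simps)
    also have "\<dots> \<le> x n * (R n - 2 * sqrt (\<alpha> n))"
      using xn le by (intro mult_left_mono) auto
    finally have u_le: "(u n)\<^sup>2 \<le> x n * (R n - 2 * sqrt (\<alpha> n))" .
    then have "0 \<le> x n * (R n - 2 * sqrt (\<alpha> n))"
      by (rule order.trans[OF zero_le_power2])
    then have defect: "0 \<le> R n - 2 * sqrt (\<alpha> n)"
      using xn by (simp add: zero_le_mult_iff)
    have "0 < 1 / x n" using xn by simp
    then have "\<alpha> n * x n \<le> R n" using le by linarith
    then have "x n \<le> R n / \<alpha> n" using \<alpha>n by (simp add: le_divide_eq mult.commute)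
    from mult_right_mono[OF this defect] show "(u n)\<^sup>2 \<le> E n"
      unfolding E_def using u_le by linarith
  qed
  have "(E \<longlongrightarrow> 2 * sqrt a / a * (2 * sqrt a - 2 * sqrt a)) F"
    unfolding E_def using a by (intro tendsto_intros \<alpha> R) auto
  then have E_lim: "(E \<longlongrightarrow> 0) F" by simp
  have "((\<lambda>n. (u n)\<^sup>2) \<longlongrightarrow> 0) F"
    by (rule tendsto_sandwich[OF _ u_sq_le tendsto_const E_lim]) simp
  from tendsto_real_sqrt[OF this] have "(u \<longlongrightarrow> 0) F"
    by (simp add: tendsto_rabs_zero_iff)
  then have "((\<lambda>n. (u n + 1) / sqrt (\<alpha> n)) \<longlongrightarrow> (0 + 1) / sqrt a) F"
    using a by (intro tendsto_intros \<alpha>) auto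
  moreover have "\<forall>\<^sub>F n in F. (u n + 1) / sqrt (\<alpha> n) = x n"
    using \<alpha>_pos by eventually_elim (simp add: u_def)
  ultimately show ?thesis by (simp add: tendsto_cong)
qed

theorem mainTheorem5:
  shows "(\<forall>(M::nat) (\<beta>::real). 2 \<le> M \<longrightarrow> 0 < \<beta> \<longrightarrow> \<beta> < 1 \<longrightarrow>
            EZhat0 M \<beta> = 1 / \<beta> + mu0 M \<beta> - sigma0 M \<beta> / sqrt pi)
       \<and> (\<forall>bstar :: nat \<Rightarrow> real.
            (\<forall>M\<ge>2. 0 < bstar M \<and> bstar M < 1 \<and>
                   (\<forall>\<beta>\<in>{0<..<1}. EZhat0 M (bstar M) \<le> EZhat0 M \<beta>))
            \<longrightarrow> (\<lambda>M. real M * bstar M) \<longlonglongrightarrow> sqrt 2 / 2)"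
proof (intro conjI allI impI)
  show "EZhat0 M \<beta> = 1 / \<beta> + mu0 M \<beta> - sigma0 M \<beta> / sqrt pi"
    if "2 \<le> M" "0 < \<beta>" "\<beta> < 1" for M \<beta>
    using that by (rule EZhat0_eq)
  fix bstar :: "nat \<Rightarrow> real"
  assume minimizer: "\<forall>M\<ge>2. 0 < bstar M \<and> bstar M < 1 \<and>
                       (\<forall>\<beta>\<in>{0<..<1}. EZhat0 M (bstar M) \<le> EZhat0 M \<beta>)"
  have bound: "\<forall>\<^sub>F M in sequentially. 0 < real M * bstar M \<and>
      1 / (real M * bstar M) + quad_coeff M * (real M * bstar M) \<le> value_bound M"
    using eventually_ge_at_top[of 2] by eventually_elim (use minimizer minimizer_bound in auto)
  from tendsto_inverse_sqrt_of_AM_GM_bound[OF quad_coeff_tendsto _ value_bound_tendsto bound]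
  have "(\<lambda>M. real M * bstar M) \<longlonglongrightarrow> 1 / sqrt 2" by simp
  moreover have "1 / sqrt 2 = sqrt 2 / (2::real)"
    by (simp add: field_simps)
  ultimately show "(\<lambda>M. real M * bstar M) \<longlonglongrightarrow> sqrt 2 / 2" by simp
qed

end
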